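(* Let $\mathbf{p}$ be a piece-wise order reversing pair on a finite alphabet $\mathcal{A}$ whose order reversing blocks consist of exactly $N_1$ $1$-blocks, $N_2$ $2$-blocks, $N_4$ $4$-blocks and $N_5$ $5$-blocks (and no blocks of other sizes). Then $$\mathrm{ARF}(\mathbf{p})=2^{N_1+2N_2+4N_4+5N_5+1}+(-1)^{N_4+N_5}\,2^{N_1+N_2+2N_4+3N_5}.$$
   Context: Let $n=\#\mathcal{A}\ge2$. A pair is $\mathbf{p}=(p_0,p_1)$ with $p_0,p_1:\mathcal{A}\to\{1,\dots,n\}$ bijections. Standard: $p_0^{-1}(1)=p_1^{-1}(n)$ and $p_1^{-1}(1)=p_0^{-1}(n)$. A standard pair is piece-wise order reversing if there are $2=k_0<\dots<k_\ell=n$ with $B_i=p_0^{-1}\{k_{i-1},\dots,k_i-1\}=p_1^{-1}\{k_{i-1},\dots,k_i-1\}$ and $p_0(b)+p_1(b)=k_{i-1}+k_i-1$ for $b\in B_i$; the $B_i$ are the order reversing blocks, and a block with $k$ letters is a $k$-block. Quadratic form: $\mathcal{Q}_{\mathbf{p}}(v)=\sum_{a\in\mathcal{A}}v_a^2+\sum_{\{a,b\}}L_{\mathbf{p}}(a,b)v_av_b\pmod 2$ for $v\in\mathbb{Z}_2^{\mathcal{A}}$, the second sum over unordered pairs of distinct letters, where $L_{\mathbf{p}}(a,b)=1$ if $(p_0(a)-p_0(b))(p_1(a)-p_1(b))<0$ and $0$ otherwise. $\mathrm{ARF}(\mathbf{p})=\#\{v\in\mathbb{Z}_2^{\mathcal{A}}:\mathcal{Q}_{\mathbf{p}}(v)=1\}$.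 *)

theory Defs
  imports Main
begin

definition is_pair :: "'a set \<Rightarrow> ('a \<Rightarrow> nat) \<Rightarrow> ('a \<Rightarrow> nat) \<Rightarrow> bool" where
  "is_pair A p0 p1 \<longleftrightarrow> finite A \<and> card A \<ge> 2 \<and>
     bij_betw p0 A {1..card A} \<and> bij_betw p1 A {1..card A}"

definition is_standard :: "'a set \<Rightarrow> ('a \<Rightarrow> nat) \<Rightarrow> ('a \<Rightarrow> nat) \<Rightarrow> bool" where
  "is_standard A p0 p1 \<longleftrightarrow> is_pair A p0 p1 \<and>
     inv_into A p0 1 = inv_into A p1 (card A) \<and>
     inv_into A p1 1 = inv_into A p0 (card A)"

definition block :: "'a set \<Rightarrow> ('a \<Rightarrow> nat) \<Rightarrow> nat list \<Rightarrow> nat \<Rightarrow> 'a set" where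
  "block A p ks i = {a \<in> A. ks ! (i - 1) \<le> p a \<and> p a < ks ! i}"

definition por_cuts :: "'a set \<Rightarrow> ('a \<Rightarrow> nat) \<Rightarrow> ('a \<Rightarrow> nat) \<Rightarrow> nat list \<Rightarrow> bool" where
  "por_cuts A p0 p1 ks \<longleftrightarrow> is_standard A p0 p1 \<and> ks \<noteq> [] \<and>
     hd ks = 2 \<and> last ks = card A \<and> sorted_wrt (<) ks \<and>
     (\<forall>i \<in> {1..<length ks}.
        block A p0 ks i = block A p1 ks i \<and>
        (\<forall>b \<in> block A p0 ks i. p0 b + p1 b = ks ! (i - 1) + ks ! i - 1))"

definition piecewise_order_reversing :: "'a set \<Rightarrow> ('a \<Rightarrow> nat) \<Rightarrow> ('a \<Rightarrow> nat) \<Rightarrow> bool" where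
  "piecewise_order_reversing A p0 p1 \<longleftrightarrow> (\<exists>ks. por_cuts A p0 p1 ks)"

definition num_blocks :: "nat list \<Rightarrow> nat \<Rightarrow> nat" where
  "num_blocks ks k = card {i \<in> {1..<length ks}. ks ! i - ks ! (i - 1) = k}"

definition Lp :: "('a \<Rightarrow> nat) \<Rightarrow> ('a \<Rightarrow> nat) \<Rightarrow> 'a \<Rightarrow> 'a \<Rightarrow> nat" where
  "Lp p0 p1 a b = (if (int (p0 a) - int (p0 b)) * (int (p1 a) - int (p1 b)) < 0 then 1 else 0)"

definition Z2vecs :: "'a set \<Rightarrow> ('a \<Rightarrow> nat) set" where
  "Z2vecs A = {v. (\<forall>a \<in> A. v a \<in> {0, 1}) \<and> (\<forall>a. a \<notin> A \<longrightarrow> v a = 0)}"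

text \<open>Quadratic form mod 2; unordered pairs of distinct letters enumerated via a linear order.\<close>
definition Qp :: "'a::linorder set \<Rightarrow> ('a \<Rightarrow> nat) \<Rightarrow> ('a \<Rightarrow> nat) \<Rightarrow> ('a \<Rightarrow> nat) \<Rightarrow> nat" where
  "Qp A p0 p1 v = ((\<Sum>a\<in>A. (v a)^2) +
     (\<Sum>(a,b) \<in> {(a,b). a \<in> A \<and> b \<in> A \<and> a < b}. Lp p0 p1 a b * v a * v b)) mod 2"

definition ARF :: "'a::linorder set \<Rightarrow> ('a \<Rightarrow> nat) \<Rightarrow> ('a \<Rightarrow> nat) \<Rightarrow> nat" where
  "ARF A p0 p1 = card {v \<in> Z2vecs A. Qp A p0 p1 v = 1}"

end

theory Submission
  imports Defs
begin

text \<open>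
  Since 2 ARF(p) = 2^n - S with S the sum of (-1)^Q(v) over all v, it suffices to compute S.
  On 0/1 vectors Q(v) = |v| + C(v), where C(v) sums v_a v_b over the inverted pairs {a, b}.
  For a piecewise order reversing pair the inversion graph is explicit: the two letters alpha,
  beta sitting at opposite ends of both orders are joined to every other letter, every block is
  a clique, and distinct blocks are not joined. Summing out v_alpha and v_beta turns S into -2
  times the sum of (-1)^C over the remaining letters, which factorizes over the blocks. A k-clique
  contributes the real part of (1 + i)(1 - i)^k, found by adding one vertex at a time; this is
  2, 2, -4, -8 for k = 1, 2, 4, 5.
\<close>

section \<open>Sums over 0/1 vectors\<close>

lemma Z2vecs_empty: "Z2vecs {} = {\<lambda>_. 0}"
  by (auto simp: Z2vecs_def)

lemma Z2vecs_outside: "v \<in> Z2vecs A \<Longrightarrow> a \<notin> A \<Longrightarrow> v a = 0"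
  by (auto simp: Z2vecs_def)

lemma Z2vecs_insert:
  assumes "a \<notin> A"
  shows "Z2vecs (insert a A) = Z2vecs A \<union> (\<lambda>v. v(a := 1)) ` Z2vecs A"
proof
  show "Z2vecs (insert a A) \<subseteq> Z2vecs A \<union> (\<lambda>v. v(a := 1)) ` Z2vecs A"
  proof
    fix v assume v: "v \<in> Z2vecs (insert a A)"
    show "v \<in> Z2vecs A \<union> (\<lambda>v. v(a := 1)) ` Z2vecs A"
    proof (cases "v a = 0")
      case True
      then have "v \<in> Z2vecs A" using v unfolding Z2vecs_def by (simp, metis)
      then show ?thesis by simp
    next
      case False
      then have "v = (v(a := 0))(a := 1)" using v by (auto simp: Z2vecs_def)
      moreover have "v(a := 0) \<in> Z2vecs A" using v by (auto simp: Z2vecs_def)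
      ultimately show ?thesis by blast
    qed
  qed
  show "Z2vecs A \<union> (\<lambda>v. v(a := 1)) ` Z2vecs A \<subseteq> Z2vecs (insert a A)"
    by (auto simp: Z2vecs_def; blast)
qed

lemma finite_Z2vecs: "finite A \<Longrightarrow> finite (Z2vecs A)"
  by (induction A rule: finite_induct) (auto simp: Z2vecs_empty Z2vecs_insert)

lemma sum_Z2vecs_insert:
  assumes "finite A" "a \<notin> A"
  shows "(\<Sum>v\<in>Z2vecs (insert a A). f v) = (\<Sum>v\<in>Z2vecs A. f v + f (v(a := 1)))"
proof -
  have "inj_on (\<lambda>v. v(a := 1)) (Z2vecs A)"
    by (rule inj_onI) (metis Z2vecs_outside assms(2) fun_upd_triv fun_upd_upd)
  moreover have "Z2vecs A \<inter> (\<lambda>v. v(a := 1)) ` Z2vecs A = {}"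
    using Z2vecs_outside[OF _ assms(2)] by fastforce
  ultimately show ?thesis
    using finite_Z2vecs[OF assms(1)]
    by (simp add: Z2vecs_insert[OF assms(2)] sum.union_disjoint sum.reindex sum.distrib)
qed

lemma card_Z2vecs: "finite A \<Longrightarrow> card (Z2vecs A) = 2 ^ card A"
proof (induction A rule: finite_induct)
  case (insert a A)
  then show ?case
    using sum_Z2vecs_insert[OF insert.hyps, of "\<lambda>_. 1::nat"] by simp
qed (simp add: Z2vecs_empty)

lemma Z2vecs_square: "v \<in> Z2vecs A \<Longrightarrow> a \<in> A \<Longrightarrow> (v a)\<^sup>2 = v a"
  by (auto simp: Z2vecs_def)

lemma sum_Z2vecs_Un_product:
  fixes f g :: "('a \<Rightarrow> nat) \<Rightarrow> int"
  assumes "finite X" "finite Y" "X \<inter> Y = {}"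
    and f_local: "\<And>u w. \<forall>a\<in>X. u a = w a \<Longrightarrow> f u = f w"
    and g_local: "\<And>u w. \<forall>a\<in>Y. u a = w a \<Longrightarrow> g u = g w"
  shows "(\<Sum>u\<in>Z2vecs (X \<union> Y). f u * g u) = (\<Sum>u\<in>Z2vecs X. f u) * (\<Sum>u\<in>Z2vecs Y. g u)"
  using assms(2,3) g_local
proof (induction Y arbitrary: g rule: finite_induct)
  case empty
  then have g_const: "g u = g (\<lambda>_. 0)" for u by blast
  have "(\<Sum>u\<in>Z2vecs X. f u * g u) = (\<Sum>u\<in>Z2vecs X. f u * g (\<lambda>_. 0))"
    by (rule sum.cong[OF refl]) (metis g_const)
  then show ?case by (simp add: Z2vecs_empty sum_distrib_right)
next
  case (insert y Y)
  have yX: "y \<notin> X \<union> Y" and XY: "X \<inter> Y = {}" using insert by auto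
  \<comment> \<open>sum out the coordinate y first, which g sees and f does not\<close>
  define g' where "g' u = g (u(y := 0)) + g (u(y := 1))" for u
  have g'_local: "g' u = g' w" if "\<forall>a\<in>Y. u a = w a" for u w
    using that by (auto simp: g'_def intro!: arg_cong2[where f = "(+)"] insert.prems)
  have drop_y: "u(y := 0) = u" if "u \<in> Z2vecs Z" "y \<notin> Z" for u Z
    using Z2vecs_outside[OF that] by auto
  have "(\<Sum>u\<in>Z2vecs (X \<union> insert y Y). f u * g u)
      = (\<Sum>u\<in>Z2vecs (X \<union> Y). f u * g u + f (u(y := 1)) * g (u(y := 1)))"
    using sum_Z2vecs_insert[OF _ yX] insert.hyps(1) assms(1) by simp
  also have "\<dots> = (\<Sum>u\<in>Z2vecs (X \<union> Y). f u * g' u)"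
  proof (rule sum.cong)
    fix u assume u: "u \<in> Z2vecs (X \<union> Y)"
    have "f (u(y := 1)) = f u" using yX by (intro f_local) auto
    then show "f u * g u + f (u(y := 1)) * g (u(y := 1)) = f u * g' u"
      using drop_y[OF u yX] by (simp add: g'_def algebra_simps)
  qed simp
  also have "\<dots> = (\<Sum>u\<in>Z2vecs X. f u) * (\<Sum>u\<in>Z2vecs Y. g' u)"
    using insert.IH[OF XY] g'_local by blast
  also have "(\<Sum>u\<in>Z2vecs Y. g' u) = (\<Sum>u\<in>Z2vecs (insert y Y). g u)"
    unfolding sum_Z2vecs_insert[OF insert.hyps]
    using drop_y[OF _ insert.hyps(2)] by (intro sum.cong) (auto simp: g'_def)
  finally show ?case .
qed

section \<open>Cross forms and their sign sums\<close>

definition cross_form :: "('a::linorder \<Rightarrow> 'a \<Rightarrow> nat) \<Rightarrow> 'a set \<Rightarrow> ('a \<Rightarrow> nat) \<Rightarrow> nat" where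
  "cross_form E S v = (\<Sum>(a, b) \<in> {(a, b). a \<in> S \<and> b \<in> S \<and> a < b}. E a b * v a * v b)"

lemma cross_form_double_sum:
  assumes "finite S"
  shows "cross_form E S v = (\<Sum>a\<in>S. \<Sum>b\<in>S. if a < b then E a b * v a * v b else 0)"
proof -
  have "{(a, b). a \<in> S \<and> b \<in> S \<and> a < b} = {p \<in> S \<times> S. fst p < snd p}" by auto
  then have "cross_form E S v
      = (\<Sum>p\<in>S \<times> S. if fst p < snd p then (\<lambda>(a, b). E a b * v a * v b) p else 0)"
    using assms by (simp add: cross_form_def sum.inter_filter)
  also have "\<dots> = (\<Sum>a\<in>S. \<Sum>b\<in>S. if a < b then E a b * v a * v b else 0)"
    unfolding sum.cartesian_product by (rule sum.cong) (auto split: prod.splits)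
  finally show ?thesis .
qed

lemma cross_form_Un:
  assumes "finite X" "finite Y" "X \<inter> Y = {}" and E_sym: "\<And>a b. E a b = E b a"
  shows "cross_form E (X \<union> Y) v
    = cross_form E X v + cross_form E Y v + (\<Sum>a\<in>X. \<Sum>b\<in>Y. E a b * v a * v b)"
proof -
  define H where "H a b = (if a < b then E a b * v a * v b else 0)" for a b
  have "(\<Sum>a\<in>Y. \<Sum>b\<in>X. H a b) = (\<Sum>a\<in>X. \<Sum>b\<in>Y. H b a)"
    by (rule sum.swap)
  moreover have "H a b + H b a = E a b * v a * v b" if "a \<in> X" "b \<in> Y" for a b
    using that assms(3) E_sym[of a b] by (auto simp: H_def algebra_simps)
  ultimately have "(\<Sum>a\<in>X. \<Sum>b\<in>Y. H a b) + (\<Sum>a\<in>Y. \<Sum>b\<in>X. H a b)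
      = (\<Sum>a\<in>X. \<Sum>b\<in>Y. E a b * v a * v b)"
    by (simp add: sum.distrib[symmetric])
  then show ?thesis
    using assms(1-3) unfolding cross_form_double_sum[OF finite_UnI[OF assms(1,2)]]
      cross_form_double_sum[OF assms(1)] cross_form_double_sum[OF assms(2)] H_def[symmetric]
    by (simp add: sum.union_disjoint sum.distrib)
qed

lemma cross_form_insert:
  assumes "finite S" "x \<notin> S" "\<And>a b. E a b = E b a"
  shows "cross_form E (insert x S) v = cross_form E S v + v x * (\<Sum>b\<in>S. E x b * v b)"
proof -
  have "{(a, b). a \<in> {x} \<and> b \<in> {x} \<and> a < b} = {}" by auto
  then have "cross_form E {x} v = 0" unfolding cross_form_def by (simp only: sum.empty)
  then show ?thesis
    using cross_form_Un[of "{x}" S E v] assms by (simp add: sum_distrib_left algebra_simps)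
qed

lemma cross_form_cong: "\<forall>a\<in>S. v a = w a \<Longrightarrow> cross_form E S v = cross_form E S w"
  unfolding cross_form_def by (intro sum.cong) auto

lemma card_odd_values:
  assumes "finite Z"
  shows "2 * int (card {z\<in>Z. f z mod 2 = 1}) = int (card Z) - (\<Sum>z\<in>Z. (-1::int) ^ f z)"
proof -
  have "(-1::int) ^ f z = 1 - 2 * (if f z mod 2 = 1 then 1 else 0)" for z
    by (simp add: minus_one_power_iff odd_iff_mod_2_eq_one)
  then have "(\<Sum>z\<in>Z. (-1::int) ^ f z) = int (card Z) - 2 * (\<Sum>z\<in>Z. if f z mod 2 = 1 then 1 else 0)"
    by (simp add: sum_subtractf sum_distrib_left)
  then show ?thesis
    using assms by (simp add: sum.inter_filter[symmetric])
qed

lemma ARF_sign_sum: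
  assumes "finite A"
  shows "2 * int (ARF A p0 p1)
    = 2 ^ card A - (\<Sum>v\<in>Z2vecs A. (-1) ^ (sum v A + cross_form (Lp p0 p1) A v))"
proof -
  have "Qp A p0 p1 v = (sum v A + cross_form (Lp p0 p1) A v) mod 2" if "v \<in> Z2vecs A" for v
    using Z2vecs_square[OF that] by (simp add: Qp_def cross_form_def)
  then have "ARF A p0 p1 = card {v \<in> Z2vecs A. (sum v A + cross_form (Lp p0 p1) A v) mod 2 = 1}"
    unfolding ARF_def by (metis (mono_tags, lifting))
  then show ?thesis
    using card_odd_values[OF finite_Z2vecs[OF assms]] card_Z2vecs[OF assms] by simp
qed

definition cross_sign_sum :: "('a::linorder \<Rightarrow> 'a \<Rightarrow> nat) \<Rightarrow> 'a set \<Rightarrow> int" where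
  "cross_sign_sum E S = (\<Sum>v\<in>Z2vecs S. (-1) ^ cross_form E S v)"

lemma cross_sign_sum_UN:
  assumes "finite I" "\<forall>i\<in>I. finite (B i)"
    and "\<forall>i\<in>I. \<forall>j\<in>I. i \<noteq> j \<longrightarrow> B i \<inter> B j = {}"
    and "\<forall>i\<in>I. \<forall>j\<in>I. i \<noteq> j \<longrightarrow> (\<forall>a\<in>B i. \<forall>b\<in>B j. E a b = 0)"
    and E_sym: "\<And>a b. E a b = E b a"
  shows "cross_sign_sum E (\<Union>i\<in>I. B i) = (\<Prod>i\<in>I. cross_sign_sum E (B i))"
  using assms(1-4)
proof (induction I rule: finite_induct)
  case empty
  then show ?case by (simp add: cross_sign_sum_def cross_form_def Z2vecs_empty)
next
  case (insert j I)
  let ?U = "\<Union>i\<in>I. B i"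
  have fin: "finite (B j)" "finite ?U" using insert by auto
  have "B j \<inter> ?U = {}" using insert by fastforce
  moreover have "(\<Sum>a\<in>B j. \<Sum>b\<in>?U. E a b * v a * v b) = 0" for v
    using insert by (fastforce intro!: sum.neutral)
  ultimately have "cross_form E (B j \<union> ?U) v = cross_form E (B j) v + cross_form E ?U v" for v
    using cross_form_Un[OF fin, of E] E_sym by simp
  then have "cross_sign_sum E (B j \<union> ?U)
      = (\<Sum>v\<in>Z2vecs (B j \<union> ?U). (-1) ^ cross_form E (B j) v * (-1) ^ cross_form E ?U v)"
    by (simp add: cross_sign_sum_def power_add)
  also have "\<dots> = cross_sign_sum E (B j) * cross_sign_sum E ?U"
    unfolding cross_sign_sum_def
    by (rule sum_Z2vecs_Un_product[OF fin \<open>B j \<inter> ?U = {}\<close>]) (metis cross_form_cong)+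
  finally show ?case using insert by simp
qed

text \<open>clique_sums k = (s_k, t_k) with s_k + t_k i = (1 + i)(1 - i)^k.\<close>
fun clique_sums :: "nat \<Rightarrow> int \<times> int" where
  "clique_sums 0 = (1, 1)"
| "clique_sums (Suc k) =
    (fst (clique_sums k) + snd (clique_sums k), snd (clique_sums k) - fst (clique_sums k))"

lemma clique_sums_values:
  "fst (clique_sums 1) = 2" "fst (clique_sums 2) = 2"
  "fst (clique_sums 4) = -4" "fst (clique_sums 5) = -8"
  by (simp_all add: eval_nat_numeral)

lemma clique_sign_sums:
  assumes "finite C" "\<forall>a\<in>C. \<forall>b\<in>C. a \<noteq> b \<longrightarrow> E a b = 1"
    and E_sym: "\<And>a b. E a b = E b a"
  shows "(cross_sign_sum E C, \<Sum>v\<in>Z2vecs C. (-1) ^ (cross_form E C v + sum v C))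
    = clique_sums (card C)"
  using assms(1,2)
proof (induction C rule: finite_induct)
  case empty
  then show ?case by (simp add: cross_sign_sum_def cross_form_def Z2vecs_empty)
next
  case (insert x C)
  let ?c = "cross_form E C" and ?S = "cross_sign_sum E C"
    and ?T = "\<Sum>v\<in>Z2vecs C. (-1::int) ^ (cross_form E C v + sum v C)"
  have IH: "(?S, ?T) = clique_sums (card C)" using insert by auto
  have extend: "cross_form E (insert x C) (v(x := t)) = ?c v + t * sum v C"
      "sum (v(x := t)) (insert x C) = t + sum v C" for v t
  proof -
    have "(\<Sum>b\<in>C. E x b * (v(x := t)) b) = sum v C"
      using insert by (intro sum.cong) auto
    moreover have "?c (v(x := t)) = ?c v" using insert.hyps by (intro cross_form_cong) auto
    ultimately show "cross_form E (insert x C) (v(x := t)) = ?c v + t * sum v C"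
      using cross_form_insert[OF insert.hyps E_sym] by simp
    have "sum (v(x := t)) C = sum v C" using insert.hyps(2) by (intro sum.cong) auto
    then show "sum (v(x := t)) (insert x C) = t + sum v C"
      using insert.hyps by simp
  qed
  have at_0: "cross_form E (insert x C) v = ?c v" "sum v (insert x C) = sum v C"
    and at_1: "cross_form E (insert x C) (v(x := 1)) = ?c v + sum v C"
      "sum (v(x := 1)) (insert x C) = 1 + sum v C"
    if "v \<in> Z2vecs C" for v
  proof -
    have "v(x := 0) = v" using Z2vecs_outside[OF that insert.hyps(2)] by auto
    then show "cross_form E (insert x C) v = ?c v" "sum v (insert x C) = sum v C"
      using extend[of v 0] by simp_all
  qed (use extend in simp_all)
  have "cross_sign_sum E (insert x C) = (\<Sum>v\<in>Z2vecs C. (-1::int) ^ ?c v + (-1) ^ (?c v + sum v C))"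
    unfolding cross_sign_sum_def sum_Z2vecs_insert[OF insert.hyps]
    by (intro sum.cong refl) (metis at_0(1) at_1(1))
  moreover have "(\<Sum>v\<in>Z2vecs (insert x C). (-1::int) ^ (cross_form E (insert x C) v + sum v (insert x C)))
      = (\<Sum>v\<in>Z2vecs C. (-1) ^ (?c v + sum v C) - (-1) ^ ?c v)"
    unfolding sum_Z2vecs_insert[OF insert.hyps]
  proof (intro sum.cong refl)
    fix v assume v: "v \<in> Z2vecs C"
    have "?c v + sum v C + (1 + sum v C) = ?c v + 1 + 2 * sum v C" by simp
    then show "(-1::int) ^ (cross_form E (insert x C) v + sum v (insert x C))
        + (-1) ^ (cross_form E (insert x C) (v(x := 1)) + sum (v(x := 1)) (insert x C))
      = (-1) ^ (?c v + sum v C) - (-1) ^ ?c v"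
      unfolding at_0[OF v] at_1[OF v] by (simp add: power_add power_mult)
  qed
  ultimately show ?case
    using IH insert.hyps by (simp add: sum.distrib sum_subtractf cross_sign_sum_def prod_eq_iff)
qed

lemma cross_sign_sum_clique:
  assumes "finite C" "\<forall>a\<in>C. \<forall>b\<in>C. a \<noteq> b \<longrightarrow> E a b = 1" "\<And>a b. E a b = E b a"
  shows "cross_sign_sum E C = fst (clique_sums (card C))"
  using clique_sign_sums[OF assms] by (metis fst_conv)

lemma apex_sign_sum:
  assumes "finite S" "x \<notin> S" "y \<notin> S" "x \<noteq> y" and E_sym: "\<And>a b. E a b = E b a"
    and x_apex: "\<forall>b\<in>insert y S. E x b = 1" and y_apex: "\<forall>b\<in>S. E y b = 1"
  shows "(\<Sum>v\<in>Z2vecs (insert x (insert y S)).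
      (-1::int) ^ (sum v (insert x (insert y S)) + cross_form E (insert x (insert y S)) v))
    = -2 * cross_sign_sum E S"
proof -
  let ?A = "insert x (insert y S)" and ?c = "cross_form E S"
  let ?f = "\<lambda>v. (-1::int) ^ (sum v ?A + cross_form E ?A v)"
  have fin: "finite (insert y S)" and "x \<notin> insert y S" using assms(1-4) by auto
  have extend: "?f (v(y := t, x := u))
      = (-1) ^ (u + t + sum v S + ?c v + t * sum v S + u * (t + sum v S))" for v t u
  proof -
    let ?w = "v(y := t, x := u)" and ?s = "sum v S"
    have on_S: "?w b = v b" if "b \<in> S" for b using that assms(2,3) by auto
    have at_xy: "?w x = u" "?w y = t" using \<open>x \<noteq> y\<close> by auto
    have sums_S: "sum ?w S = ?s" "(\<Sum>b\<in>S. E y b * ?w b) = ?s" "(\<Sum>b\<in>S. E x b * ?w b) = ?s"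
      using x_apex y_apex on_S by (auto intro: sum.cong)
    then have "(\<Sum>b\<in>insert y S. E x b * ?w b) = t + ?s"
      using x_apex assms(1,3) at_xy by simp
    moreover have "cross_form E S ?w = ?c v" using on_S by (intro cross_form_cong) auto
    moreover have "cross_form E ?A ?w
        = cross_form E (insert y S) ?w + ?w x * (\<Sum>b\<in>insert y S. E x b * ?w b)"
      by (rule cross_form_insert[OF fin \<open>x \<notin> insert y S\<close>]) (fact E_sym)
    moreover have "cross_form E (insert y S) ?w = cross_form E S ?w + ?w y * (\<Sum>b\<in>S. E y b * ?w b)"
      by (rule cross_form_insert[OF assms(1,3)]) (fact E_sym)
    ultimately have "cross_form E ?A ?w = ?c v + t * ?s + u * (t + ?s)"
      by (simp only: at_xy sums_S)
    moreover have "sum ?w ?A = u + t + ?s"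
      using assms(1-4) sums_S(1) at_xy by simp
    ultimately show ?thesis by (simp add: algebra_simps)
  qed
  have "(\<Sum>v\<in>Z2vecs ?A. ?f v)
      = (\<Sum>v\<in>Z2vecs S. ?f v + ?f (v(x := 1)) + (?f (v(y := 1)) + ?f (v(y := 1, x := 1))))"
    unfolding sum_Z2vecs_insert[OF fin \<open>x \<notin> insert y S\<close>] sum_Z2vecs_insert[OF assms(1,3)] ..
  also have "\<dots> = (\<Sum>v\<in>Z2vecs S. -2 * (-1) ^ ?c v)"
  proof (intro sum.cong refl)
    fix v assume v: "v \<in> Z2vecs S"
    have "v x = 0" "v y = 0" using Z2vecs_outside[OF v] assms(2,3) by simp_all
    then have "v(y := 0, x := 0) = v" "v(y := 0, x := 1) = v(x := 1)" "v(y := 1, x := 0) = v(y := 1)"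
      using \<open>x \<noteq> y\<close> by (auto simp: fun_eq_iff)
    then have "?f v + ?f (v(x := 1)) + (?f (v(y := 1)) + ?f (v(y := 1, x := 1)))
        = ?f (v(y := 0, x := 0)) + ?f (v(y := 0, x := 1)) + (?f (v(y := 1, x := 0)) + ?f (v(y := 1, x := 1)))"
      by (simp only:)
    also have "\<dots> = -2 * (-1) ^ ?c v"
      unfolding extend by (auto simp: minus_one_power_iff)
    finally show "?f v + ?f (v(x := 1)) + (?f (v(y := 1)) + ?f (v(y := 1, x := 1))) = -2 * (-1) ^ ?c v" .
  qed
  finally show ?thesis by (simp add: cross_sign_sum_def sum_distrib_left)
qed

section \<open>Piecewise order reversing pairs\<close>

lemma exists_cut_interval:
  fixes ks :: "nat list"
  assumes "ks \<noteq> []" "ks ! 0 \<le> x" "x < ks ! (length ks - 1)"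
  shows "\<exists>i\<in>{1..<length ks}. ks ! (i - 1) \<le> x \<and> x < ks ! i"
proof -
  define i where "i = (LEAST i. i < length ks \<and> x < ks ! i)"
  have "length ks - 1 < length ks \<and> x < ks ! (length ks - 1)" using assms by auto
  then have i: "i < length ks \<and> x < ks ! i" unfolding i_def by (rule LeastI)
  then have "i \<noteq> 0" using assms(2) by (intro notI) auto
  then have "\<not> (i - 1 < length ks \<and> x < ks ! (i - 1))"
    unfolding i_def by (intro not_less_Least) (auto simp: i_def)
  then show ?thesis using i \<open>i \<noteq> 0\<close> by (intro bexI[of _ i]) auto
qed

lemma Lp_sym: "Lp p0 p1 a b = Lp p0 p1 b a"
  by (auto simp: Lp_def mult_less_0_iff)

lemma Lp_by_orders:
  assumes "p0 a \<noteq> p0 b" "p1 a \<noteq> p1 b"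
  shows "Lp p0 p1 a b = (if (p0 a < p0 b) = (p1 a < p1 b) then 0 else 1)"
  using assms by (auto simp: Lp_def mult_less_0_iff)

locale piecewise_reversal =
  fixes A :: "'a::linorder set" and p0 p1 :: "'a \<Rightarrow> nat" and ks :: "nat list"
  assumes cuts: "por_cuts A p0 p1 ks"
begin

abbreviation blk :: "nat \<Rightarrow> 'a set" where
  "blk i \<equiv> block A p0 ks i"

lemma
  shows finite_A: "finite A" and two_le_card: "2 \<le> card A"
    and inj_p0: "inj_on p0 A" and inj_p1: "inj_on p1 A"
    and image_p0: "p0 ` A = {1..card A}" and image_p1: "p1 ` A = {1..card A}"
  using cuts by (auto simp: por_cuts_def is_standard_def is_pair_def bij_betw_def)

lemma
  shows cuts_nonempty: "ks \<noteq> []" and first_cut: "ks ! 0 = 2"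
    and last_cut: "ks ! (length ks - 1) = card A"
  using cuts by (auto simp: por_cuts_def hd_conv_nth last_conv_nth)

lemma cut_mono: "i \<le> j \<Longrightarrow> j < length ks \<Longrightarrow> ks ! i \<le> ks ! j"
  using cuts sorted_wrt_nth_less[of "(<)" ks i j]
  by (cases "i = j") (auto simp: por_cuts_def intro: less_imp_le)

lemma block_props:
  assumes "i \<in> {1..<length ks}" "a \<in> blk i"
  shows "a \<in> A" "ks ! (i - 1) \<le> p0 a" "p0 a < ks ! i" "ks ! (i - 1) \<le> p1 a" "p1 a < ks ! i"
    "p0 a + p1 a = ks ! (i - 1) + ks ! i - 1"
proof -
  have "blk i = block A p1 ks i" "\<forall>b \<in> blk i. p0 b + p1 b = ks ! (i - 1) + ks ! i - 1"
    using cuts assms(1) by (auto simp: por_cuts_def)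
  then show "a \<in> A" "ks ! (i - 1) \<le> p0 a" "p0 a < ks ! i" "ks ! (i - 1) \<le> p1 a" "p1 a < ks ! i"
      "p0 a + p1 a = ks ! (i - 1) + ks ! i - 1"
    using assms(2) unfolding block_def by blast+
qed

definition alpha :: 'a where
  "alpha = inv_into A p0 1"

definition beta :: 'a where
  "beta = inv_into A p0 (card A)"

lemma alpha: "alpha \<in> A" "p0 alpha = 1" "p1 alpha = card A"
proof -
  have in_images: "1 \<in> p0 ` A" "card A \<in> p1 ` A" using image_p0 image_p1 two_le_card by auto
  have "alpha = inv_into A p1 (card A)"
    using cuts by (simp add: alpha_def por_cuts_def is_standard_def)
  then show "alpha \<in> A" "p0 alpha = 1" "p1 alpha = card A"
    unfolding alpha_def using f_inv_into_f inv_into_into in_images by metis+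
qed

lemma beta: "beta \<in> A" "p0 beta = card A" "p1 beta = 1"
proof -
  have in_images: "card A \<in> p0 ` A" "1 \<in> p1 ` A" using image_p0 image_p1 two_le_card by auto
  have "beta = inv_into A p1 1"
    using cuts by (simp add: beta_def por_cuts_def is_standard_def)
  then show "beta \<in> A" "p0 beta = card A" "p1 beta = 1"
    unfolding beta_def using f_inv_into_f inv_into_into in_images by metis+
qed

lemma range_p0: "a \<in> A \<Longrightarrow> 1 \<le> p0 a \<and> p0 a \<le> card A"
  and range_p1: "a \<in> A \<Longrightarrow> 1 \<le> p1 a \<and> p1 a \<le> card A"
  using image_p0 image_p1 by auto

lemma Lp_alpha:
  assumes "b \<in> A" "b \<noteq> alpha"
  shows "Lp p0 p1 alpha b = 1"
proof -
  have "p0 b \<noteq> p0 alpha" "p1 b \<noteq> p1 alpha"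
    using assms alpha(1) inj_on_eq_iff[OF inj_p0] inj_on_eq_iff[OF inj_p1] by auto
  then show ?thesis
    using alpha range_p0[OF assms(1)] range_p1[OF assms(1)] by (simp add: Lp_by_orders)
qed

lemma Lp_beta:
  assumes "b \<in> A" "b \<noteq> beta"
  shows "Lp p0 p1 beta b = 1"
proof -
  have "p0 b \<noteq> p0 beta" "p1 b \<noteq> p1 beta"
    using assms beta(1) inj_on_eq_iff[OF inj_p0] inj_on_eq_iff[OF inj_p1] by auto
  then show ?thesis
    using beta range_p0[OF assms(1)] range_p1[OF assms(1)] by (simp add: Lp_by_orders)
qed

lemma cut_range:
  assumes "i \<in> {1..<length ks}"
  shows "2 \<le> ks ! (i - 1)" "ks ! i \<le> card A"
  using cut_mono[of 0 "i - 1"] cut_mono[of i "length ks - 1"] assms first_cut last_cut by auto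

lemma Lp_within_block:
  assumes "i \<in> {1..<length ks}" "a \<in> blk i" "b \<in> blk i" "a \<noteq> b"
  shows "Lp p0 p1 a b = 1"
proof -
  have "p0 a \<noteq> p0 b"
    using assms block_props(1)[OF assms(1)] inj_on_eq_iff[OF inj_p0] by blast
  moreover have "p0 a + p1 a = p0 b + p1 b"
    using block_props(6)[OF assms(1,2)] block_props(6)[OF assms(1,3)] by simp
  ultimately show ?thesis by (simp add: Lp_by_orders) linarith
qed

lemma blocks_ordered:
  assumes "i \<in> {1..<length ks}" "j \<in> {1..<length ks}" "i < j" "a \<in> blk i" "b \<in> blk j"
  shows "p0 a < p0 b" "p1 a < p1 b"
proof -
  have "ks ! i \<le> ks ! (j - 1)" using assms(2,3) by (intro cut_mono) auto
  then show "p0 a < p0 b" "p1 a < p1 b"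
    using block_props[OF assms(1,4)] block_props[OF assms(2,5)] by linarith+
qed

lemma blocks_apart:
  assumes "i \<in> {1..<length ks}" "j \<in> {1..<length ks}" "i \<noteq> j" "a \<in> blk i" "b \<in> blk j"
  shows "a \<noteq> b" "Lp p0 p1 a b = 0"
proof -
  have "(p0 a < p0 b \<and> p1 a < p1 b) \<or> (p0 b < p0 a \<and> p1 b < p1 a)"
    using assms blocks_ordered by (metis linorder_neqE_nat)
  then show "a \<noteq> b" "Lp p0 p1 a b = 0" by (auto simp: Lp_by_orders)
qed

lemma card_block:
  assumes "i \<in> {1..<length ks}"
  shows "card (blk i) = ks ! i - ks ! (i - 1)"
proof -
  have "{ks ! (i - 1)..<ks ! i} \<subseteq> p0 ` A" using cut_range[OF assms] image_p0 by auto
  then have "p0 ` blk i = {ks ! (i - 1)..<ks ! i}" by (auto simp: block_def)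
  moreover have "inj_on p0 (blk i)" using inj_p0 by (rule inj_on_subset) (auto simp: block_def)
  ultimately show ?thesis by (metis card_image card_atLeastLessThan)
qed

lemma block_inner:
  assumes "i \<in> {1..<length ks}" "a \<in> blk i"
  shows "2 \<le> p0 a" "p0 a < card A"
  using block_props[OF assms] cut_range[OF assms(1)] by linarith+

lemma letters_decomposition:
  defines "U \<equiv> \<Union>i\<in>{1..<length ks}. blk i"
  shows "A = insert alpha (insert beta U)" "alpha \<notin> U" "beta \<notin> U" "alpha \<noteq> beta"
proof -
  show "alpha \<notin> U" "beta \<notin> U" "alpha \<noteq> beta"
    using alpha beta two_le_card block_inner unfolding U_def by fastforce+
  have "a \<in> U" if "a \<in> A" "a \<noteq> alpha" "a \<noteq> beta" for a
  proof -
    have "p0 a \<noteq> 1" "p0 a \<noteq> card A"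
      using that alpha beta inj_on_eq_iff[OF inj_p0] by metis+
    then have "ks ! 0 \<le> p0 a" "p0 a < ks ! (length ks - 1)"
      using range_p0[OF that(1)] first_cut last_cut by auto
    then obtain i where "i \<in> {1..<length ks}" "ks ! (i - 1) \<le> p0 a" "p0 a < ks ! i"
      using exists_cut_interval[OF cuts_nonempty] by blast
    then show ?thesis using that(1) unfolding U_def block_def by blast
  qed
  then show "A = insert alpha (insert beta U)"
    using alpha(1) beta(1) block_props(1) unfolding U_def by blast
qed

lemma finite_blocks: "finite (blk i)"
  using finite_A by (rule finite_subset[rotated]) (auto simp: block_def)

lemma blocks_disjoint:
  "\<forall>i\<in>{1..<length ks}. \<forall>j\<in>{1..<length ks}. i \<noteq> j \<longrightarrow> blk i \<inter> blk j = {}"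
  by (metis blocks_apart(1) disjoint_iff)

lemma apex_reduction:
  defines "U \<equiv> \<Union>i\<in>{1..<length ks}. blk i"
  shows "(\<Sum>v\<in>Z2vecs A. (-1) ^ (sum v A + cross_form (Lp p0 p1) A v))
    = -2 * cross_sign_sum (Lp p0 p1) U"
proof -
  note decomp = letters_decomposition[folded U_def]
  have U_letters: "U \<subseteq> A" "finite U" using decomp(1) finite_blocks by (auto simp: U_def)
  have "\<forall>b\<in>insert beta U. Lp p0 p1 alpha b = 1"
    using Lp_alpha beta(1) U_letters(1) decomp(2,4) by (metis insert_iff subsetD)
  moreover have "\<forall>b\<in>U. Lp p0 p1 beta b = 1"
    using Lp_beta U_letters(1) decomp(3) by (metis subsetD)
  ultimately have "(\<Sum>v\<in>Z2vecs (insert alpha (insert beta U)). (-1::int) ^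
      (sum v (insert alpha (insert beta U)) + cross_form (Lp p0 p1) (insert alpha (insert beta U)) v))
      = -2 * cross_sign_sum (Lp p0 p1) U"
    by (rule apex_sign_sum[OF U_letters(2) decomp(2-4) Lp_sym])
  then show ?thesis unfolding decomp(1)[symmetric] .
qed

lemma cross_sign_sum_blocks:
  "cross_sign_sum (Lp p0 p1) (\<Union>i\<in>{1..<length ks}. blk i)
    = (\<Prod>i\<in>{1..<length ks}. fst (clique_sums (ks ! i - ks ! (i - 1))))"
proof -
  have "cross_sign_sum (Lp p0 p1) (\<Union>i\<in>{1..<length ks}. blk i)
      = (\<Prod>i\<in>{1..<length ks}. cross_sign_sum (Lp p0 p1) (blk i))"
  proof (rule cross_sign_sum_UN)
    show "\<forall>i\<in>{1..<length ks}. \<forall>j\<in>{1..<length ks}. i \<noteq> j \<longrightarrow>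
        (\<forall>a\<in>blk i. \<forall>b\<in>blk j. Lp p0 p1 a b = 0)"
      by (auto intro: blocks_apart(2))
  qed (simp_all add: finite_blocks blocks_disjoint Lp_sym)
  also have "\<dots> = (\<Prod>i\<in>{1..<length ks}. fst (clique_sums (ks ! i - ks ! (i - 1))))"
  proof (rule prod.cong[OF refl])
    fix i assume i: "i \<in> {1..<length ks}"
    then have "\<forall>a\<in>blk i. \<forall>b\<in>blk i. a \<noteq> b \<longrightarrow> Lp p0 p1 a b = 1"
      using Lp_within_block by blast
    then show "cross_sign_sum (Lp p0 p1) (blk i) = fst (clique_sums (ks ! i - ks ! (i - 1)))"
      using cross_sign_sum_clique[where E = "Lp p0 p1", OF finite_blocks _ Lp_sym] card_block[OF i] by simp
  qed
  finally show ?thesis .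
qed

lemma ARF_clique_product:
  "2 * int (ARF A p0 p1)
    = 2 ^ card A + 2 * (\<Prod>i\<in>{1..<length ks}. fst (clique_sums (ks ! i - ks ! (i - 1))))"
  using ARF_sign_sum[OF finite_A, of p0 p1] apex_reduction cross_sign_sum_blocks by simp

lemma card_letters: "card A = 2 + (\<Sum>i\<in>{1..<length ks}. ks ! i - ks ! (i - 1))"
proof -
  let ?U = "\<Union>i\<in>{1..<length ks}. blk i"
  have "card (insert alpha (insert beta ?U)) = 2 + card ?U"
    using letters_decomposition(2-4) finite_blocks by simp
  then have "card A = 2 + card ?U"
    unfolding letters_decomposition(1)[symmetric] .
  also have "card ?U = (\<Sum>i\<in>{1..<length ks}. card (blk i))"
    by (rule card_UN_disjoint) (simp_all add: finite_blocks blocks_disjoint)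
  finally show ?thesis
    using card_block by simp
qed

end

lemma prod_by_value:
  assumes "finite I" "finite K" "d ` I \<subseteq> K"
  shows "(\<Prod>i\<in>I. g (d i)) = (\<Prod>k\<in>K. g k ^ card {i\<in>I. d i = k})"
proof -
  have "(\<Prod>i\<in>{i\<in>I. d i = k}. g (d i)) = g k ^ card {i\<in>I. d i = k}" for k
    by (simp add: prod.cong[of _ _ _ "\<lambda>_. g k"])
  then show ?thesis using prod.group[OF assms, of "\<lambda>i. g (d i)"] by simp
qed

lemma sum_by_value:
  fixes d :: "'a \<Rightarrow> nat"
  assumes "finite I" "finite K" "d ` I \<subseteq> K"
  shows "(\<Sum>i\<in>I. d i) = (\<Sum>k\<in>K. k * card {i\<in>I. d i = k})"
proof -
  have "(\<Sum>i\<in>{i\<in>I. d i = k}. d i) = k * card {i\<in>I. d i = k}" for k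
    by (simp add: sum.cong[of _ _ _ "\<lambda>_. k"])
  then show ?thesis using sum.group[OF assms, of d] by (simp add: mult.commute)
qed

theorem lemma4p9:
  fixes A :: "'a::linorder set" and p0 p1 :: "'a \<Rightarrow> nat" and ks :: "nat list"
    and N1 N2 N4 N5 :: nat
  assumes "por_cuts A p0 p1 ks"
    and "\<forall>i \<in> {1..<length ks}. ks ! i - ks ! (i - 1) \<in> {1, 2, 4, 5}"
    and "num_blocks ks 1 = N1" and "num_blocks ks 2 = N2"
    and "num_blocks ks 4 = N4" and "num_blocks ks 5 = N5"
  shows "int (ARF A p0 p1) = 2 ^ (N1 + 2*N2 + 4*N4 + 5*N5 + 1)
            + (-1) ^ (N4 + N5) * 2 ^ (N1 + N2 + 2*N4 + 3*N5)"
proof -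
  interpret piecewise_reversal A p0 p1 ks by unfold_locales (fact assms(1))
  let ?I = "{1..<length ks}" and ?d = "\<lambda>i. ks ! i - ks ! (i - 1)"
  have sizes: "?d ` ?I \<subseteq> {1, 2, 4, 5}" using assms(2) by auto
  have counts: "card {i \<in> ?I. ?d i = k} = num_blocks ks k" for k
    by (simp add: num_blocks_def)
  have "card A = 2 + (N1 + 2*N2 + 4*N4 + 5*N5)"
    using card_letters sum_by_value[OF _ _ sizes] counts assms(3-6) by simp
  moreover have "(\<Prod>i\<in>?I. fst (clique_sums (?d i))) = 2^N1 * 2^N2 * (-4)^N4 * (-8)^N5"
    using prod_by_value[OF _ _ sizes, where g = "\<lambda>k. fst (clique_sums k)"] counts
      clique_sums_values assms(3-6) by simp
  ultimately have "2 * int (ARF A p0 p1) = 2 ^ (2 + (N1 + 2*N2 + 4*N4 + 5*N5))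
      + 2 * (2^N1 * 2^N2 * (-4)^N4 * (-8)^N5)"
    using ARF_clique_product by simp
  moreover have "(-4::int)^N4 = (-1)^N4 * 2^(2*N4)" "(-8::int)^N5 = (-1)^N5 * 2^(3*N5)"
    by (simp_all add: power_mult power_mult_distrib[symmetric])
  ultimately show ?thesis by (simp add: power_add algebra_simps)
qed

end
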